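(* Fix $t>1$ and let $(g_{n,t})_{n\ge0}$ be defined by $g_{0,t}=1$, $g_{n,t}=n\,g_{n-1,t}^{\,t}$ $(n\ge1)$. Let $\sigma_t=\prod_{n=1}^\infty n^{1/t^n}$. For $x\in[0,\infty)$ define $f_t(x)=\prod_{m=1}^{\infty}(1+mx)^{1/t^m}\in[1,\infty)$. Then for each $N\ge2$ and $n\ge1$ there exists a positive number $\mu=\mu(N,n,t)$ such that $$g_{n,t}=\sigma_t^{\,t^n}n^{-1/(t-1)}\left[1+\sum_{k=1}^{N-1}\frac{1}{n^k k!}\frac{\partial^k f_t}{\partial x^k}(0)+\frac{1}{n^N N!}\frac{\partial^N f_t}{\partial x^N}(\mu)\right]^{-1}.$$ Moreover, for fixed $N\ge2$ and fixed $t>1$, $$\lim_{n\to\infty}\mu(N,n,t)=0,\qquad \lim_{n\to\infty}\frac{\partial^N f_t}{\partial x^N}(\mu(N,n,t))=\frac{\partial^N f_t}{\partial x^N}(0).$$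
   Context: Derivatives of $f_t$ at $x=0$ are right-sided derivatives. *)

theory Defs
  imports "HOL-Analysis.Analysis"
begin

fun g_seq :: "real \<Rightarrow> nat \<Rightarrow> real" where
  "g_seq t 0 = 1"
| "g_seq t (Suc n) = real (Suc n) * (g_seq t n) powr t"

definition sigma_t :: "real \<Rightarrow> real" where
  "sigma_t t = (\<Prod>m. real (Suc m) powr (1 / t ^ Suc m))"

definition f_t :: "real \<Rightarrow> real \<Rightarrow> real" where
  "f_t t x = (\<Prod>m. (1 + real (Suc m) * x) powr (1 / t ^ Suc m))"

definition rderiv :: "(real \<Rightarrow> real) \<Rightarrow> real \<Rightarrow> real" where
  "rderiv h x = (THE D. (h has_real_derivative D) (at x within {0..}))"

definition nrderiv :: "nat \<Rightarrow> (real \<Rightarrow> real) \<Rightarrow> real \<Rightarrow> real" where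
  "nrderiv k h = (rderiv ^^ k) h"

end

theory Submission
  imports Defs "HOL-Real_Asymp.Real_Asymp"
begin

text \<open>Taking logarithms, \<open>ln g\<^sub>n = t\<^sup>n \<Sum>\<^sub>m\<^sub><\<^sub>n ln (m+1) / t\<^sup>m\<^sup>+\<^sup>1\<close>, while \<open>ln \<sigma>\<^sub>t\<close> is the full
  series; so \<open>t\<^sup>n ln \<sigma>\<^sub>t - ln g\<^sub>n\<close> is the tail \<open>t\<^sup>n \<Sum>\<^sub>m\<^sub>\<ge>\<^sub>n ln (m+1) / t\<^sup>m\<^sup>+\<^sup>1\<close>. Writing
  \<open>m + 1 = n (1 + (m+1-n)/n)\<close> splits the tail into \<open>ln n / (t-1)\<close> and \<open>ln f\<^sub>t(1/n)\<close>, whence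
  exactly \<open>g\<^sub>n = \<sigma>\<^sub>t\<^bsup>t\<^sup>n\<^esup> n\<^bsup>-1/(t-1)\<^esup> / f\<^sub>t(1/n)\<close>. The expansion is then Taylor's theorem with
  Lagrange remainder for \<open>f\<^sub>t\<close> on \<open>[0,1/n]\<close>, with \<open>f\<^sub>t(0) = 1\<close> and \<open>\<mu> \<in> (0,1/n)\<close>. It applies
  because \<open>ln f\<^sub>t\<close> is a series whose termwise derivatives of every order converge uniformly on
  \<open>[0,\<infinity>)\<close>, so \<open>f\<^sub>t\<close> has right derivatives of all orders there. Finally \<open>\<mu> \<rightarrow> 0\<close>, and
  continuity of the \<open>N\<close>-th derivative at \<open>0\<close> gives the second limit.\<close>

lemma at_within_nonneg_neq_bot: "0 \<le> (x::real) \<Longrightarrow> at x within {0..} \<noteq> bot"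
proof (cases "x = 0")
  case False
  assume "0 \<le> x"
  with False have "at x within {0..} = at x"
    by (intro at_within_interior) simp
  then show ?thesis by (metis at_neq_bot)
qed (simp add: at_within_Ici_at_right)

lemma rderiv_eqI:
  assumes "0 \<le> x" "(h has_real_derivative D) (at x within {0..})"
  shows "rderiv h x = D"
  unfolding rderiv_def
  using assms has_field_derivative_unique[OF _ _ at_within_nonneg_neq_bot[OF assms(1)]]
  by (intro the_equality) auto

lemma has_real_derivative_nonneg_cong:
  assumes "\<forall>y\<ge>0. h y = h' y" "0 \<le> (x::real)"
  shows "(h has_real_derivative D) (at x within {0..}) \<longleftrightarrow>
    (h' has_real_derivative D) (at x within {0..})"
  by (rule has_field_derivative_cong_ev) (use assms in auto)

lemma rderiv_nonneg_cong:
  assumes "\<forall>y\<ge>0. h y = h' y" "0 \<le> (x::real)"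
  shows "rderiv h x = rderiv h' x"
  unfolding rderiv_def using has_real_derivative_nonneg_cong[OF assms] by simp

lemma nrderiv_0 [simp]: "nrderiv 0 h = h"
  by (simp add: nrderiv_def)

lemma nrderiv_Suc: "nrderiv (Suc k) h = nrderiv k (rderiv h)"
  unfolding nrderiv_def funpow_Suc_right by simp

fun rdifferentiable_upto :: "nat \<Rightarrow> (real \<Rightarrow> real) \<Rightarrow> bool" where
  "rdifferentiable_upto 0 h \<longleftrightarrow> True"
| "rdifferentiable_upto (Suc k) h \<longleftrightarrow>
    (\<forall>x\<ge>0. (h has_real_derivative rderiv h x) (at x within {0..})) \<and>
    rdifferentiable_upto k (rderiv h)"

lemma rdifferentiable_upto_cong:
  "rdifferentiable_upto k h \<Longrightarrow> \<forall>y\<ge>0. h y = h' y \<Longrightarrow> rdifferentiable_upto k h'"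
proof (induction k arbitrary: h h')
  case 0
  then show ?case by simp
next
  case (Suc k)
  have "\<forall>y\<ge>0. rderiv h y = rderiv h' y"
    using rderiv_nonneg_cong Suc.prems(2) by blast
  then show ?case
    using Suc.prems Suc.IH[of "rderiv h" "rderiv h'"] has_real_derivative_nonneg_cong[OF Suc.prems(2)]
    by auto
qed

lemma rdifferentiable_upto_SucI:
  assumes "\<And>x. 0 \<le> x \<Longrightarrow> (h has_real_derivative h' x) (at x within {0..})"
    and "rdifferentiable_upto k h'"
  shows "rdifferentiable_upto (Suc k) h"
proof -
  have "\<forall>y\<ge>0. h' y = rderiv h y"
    using rderiv_eqI assms(1) by metis
  then show ?thesis
    using assms rdifferentiable_upto_cong[OF assms(2)] by auto
qed

lemma rdifferentiable_upto_SucD: "rdifferentiable_upto (Suc k) h \<Longrightarrow> rdifferentiable_upto k h"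
proof (induction k arbitrary: h)
  case 0
  then show ?case by simp
next
  case (Suc k)
  then show ?case by (metis rdifferentiable_upto.simps(2))
qed

lemma has_real_derivative_nrderiv:
  "rdifferentiable_upto k h \<Longrightarrow> m < k \<Longrightarrow> 0 \<le> x \<Longrightarrow>
    (nrderiv m h has_real_derivative nrderiv (Suc m) h x) (at x within {0..})"
proof (induction k arbitrary: h m)
  case 0
  then show ?case by simp
next
  case (Suc k)
  then show ?case
    using Suc.IH[of "rderiv h" "m - 1"] by (cases m) (simp_all add: nrderiv_Suc)
qed

lemma rdifferentiable_upto_add:
  "rdifferentiable_upto k g \<Longrightarrow> rdifferentiable_upto k h \<Longrightarrow>
    rdifferentiable_upto k (\<lambda>x. g x + h x)"
proof (induction k arbitrary: g h)
  case 0
  then show ?case by simp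
next
  case (Suc k)
  then show ?case
    by (intro rdifferentiable_upto_SucI[where h' = "\<lambda>x. rderiv g x + rderiv h x"])
      (auto intro!: derivative_eq_intros)
qed

lemma rdifferentiable_upto_mult:
  "rdifferentiable_upto k g \<Longrightarrow> rdifferentiable_upto k h \<Longrightarrow>
    rdifferentiable_upto k (\<lambda>x. g x * h x)"
proof (induction k arbitrary: g h)
  case 0
  then show ?case by simp
next
  case (Suc k)
  then have "rdifferentiable_upto k (\<lambda>x. rderiv g x * h x + g x * rderiv h x)"
    using rdifferentiable_upto_SucD[OF Suc.prems(1)] rdifferentiable_upto_SucD[OF Suc.prems(2)]
    by (intro rdifferentiable_upto_add Suc.IH) auto
  with Suc.prems show ?case
    by (intro rdifferentiable_upto_SucI[where h' = "\<lambda>x. rderiv g x * h x + g x * rderiv h x"])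
      (auto intro!: derivative_eq_intros)
qed

lemma rdifferentiable_upto_exp:
  "rdifferentiable_upto k h \<Longrightarrow> rdifferentiable_upto k (\<lambda>x. exp (h x))"
proof (induction k arbitrary: h)
  case 0
  then show ?case by simp
next
  case (Suc k)
  then have "rdifferentiable_upto k (\<lambda>x. exp (h x) * rderiv h x)"
    using rdifferentiable_upto_SucD[OF Suc.prems] by (intro rdifferentiable_upto_mult Suc.IH) auto
  with Suc.prems show ?case
    by (intro rdifferentiable_upto_SucI[where h' = "\<lambda>x. exp (h x) * rderiv h x"])
      (auto intro!: derivative_eq_intros)
qed

lemma Maclaurin_right:
  fixes h :: real
  assumes "0 < h" "0 < n" "diff 0 = f"
    and diff_Suc: "\<And>m t. m < n \<Longrightarrow> 0 \<le> t \<Longrightarrow> t \<le> h \<Longrightarrow>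
      (diff m has_real_derivative diff (Suc m) t) (at t within {0..})"
  shows "\<exists>t. 0 < t \<and> t < h \<and>
    f h = (\<Sum>m<n. diff m 0 / fact m * h ^ m) + diff n t / fact n * h ^ n"
proof -
  txt \<open>Extending each \<open>diff m\<close> linearly to the left of \<open>0\<close> turns the right derivatives at \<open>0\<close>
    into two-sided ones, so that the classical \<open>Maclaurin\<close> applies.\<close>
  define e where "e m x = (if x \<in> {0..} then diff m x else diff m 0 + diff (Suc m) 0 * x)" for m x
  have "DERIV (e m) t :> e (Suc m) t" if "m < n" "0 \<le> t" "t \<le> h" for m t
  proof -
    have right: "{0..} \<union> closure {0::real..} \<inter> closure {..<0} = {0..}"
      and left: "{..<0} \<union> closure {0::real..} \<inter> closure {..<0} = {..0}"
      by auto
    have "((\<lambda>x. diff m 0 + diff (Suc m) 0 * x) has_vector_derivative diff (Suc m) 0) (at x within S)"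
      for x S
      unfolding has_real_derivative_iff_has_vector_derivative[symmetric]
      by (auto intro!: derivative_eq_intros)
    then have "((\<lambda>x. if x \<in> {0..} then diff m x else diff m 0 + diff (Suc m) 0 * x)
        has_vector_derivative (if t \<in> {0..} then diff (Suc m) t else diff (Suc m) 0)) (at t within UNIV)"
      using diff_Suc[OF that]
      by (intro has_vector_derivative_If_within_closures[where T = "{..<0}"])
        (auto simp: right left has_real_derivative_iff_has_vector_derivative[symmetric])
    then show ?thesis
      using that unfolding e_def has_real_derivative_iff_has_vector_derivative by simp
  qed
  with Maclaurin[OF assms(1,2), of e "e 0"] obtain t where
    "0 < t" "t < h" "e 0 h = (\<Sum>m<n. e m 0 / fact m * h ^ m) + e n t / fact n * h ^ n"
    by blast
  then show ?thesis
    using assms(1,3) by (intro exI[of _ t]) (simp add: e_def)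
qed

lemma summable_Suc_power_divide_power:
  fixes s :: real
  assumes "1 < s"
  shows "summable (\<lambda>m. real (Suc m) ^ k / s ^ m)"
proof -
  define r where "r = sqrt s"
  have r: "1 < r"
    using assms by (simp add: r_def)
  have "(\<lambda>m. real (Suc m) ^ k / r ^ m) \<longlonglongrightarrow> 0"
    using r by real_asymp
  then have "eventually (\<lambda>m. real (Suc m) ^ k / r ^ m < 1) sequentially"
    by (rule order_tendstoD) simp
  then have "eventually (\<lambda>m. norm (real (Suc m) ^ k / s ^ m) \<le> (1 / r) ^ m) sequentially"
  proof (rule eventually_mono)
    fix m
    assume "real (Suc m) ^ k / r ^ m < 1"
    moreover have "s ^ m = r ^ m * r ^ m"
      using assms by (simp add: r_def flip: power_mult_distrib)
    ultimately show "norm (real (Suc m) ^ k / s ^ m) \<le> (1 / r) ^ m"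
      using r by (simp add: field_simps power_one_over)
  qed
  then show ?thesis
    by (rule summable_comparison_test_ev) (use r in simp)
qed

text \<open>\<open>ln_factor_deriv t k m\<close> is the \<open>k\<close>-th derivative of \<open>x \<mapsto> ln (1 + (m+1) x) / t\<^sup>m\<^sup>+\<^sup>1\<close>,
  the logarithm of the \<open>m\<close>-th factor of \<open>f_t t\<close>.\<close>

definition ln_factor_deriv :: "real \<Rightarrow> nat \<Rightarrow> nat \<Rightarrow> real \<Rightarrow> real" where
  "ln_factor_deriv t k m x =
    (if k = 0 then ln (1 + real (Suc m) * x) / t ^ Suc m
     else (-1) ^ (k - 1) * fact (k - 1) * real (Suc m) ^ k / t ^ Suc m / (1 + real (Suc m) * x) ^ k)"

definition ln_f_deriv :: "real \<Rightarrow> nat \<Rightarrow> real \<Rightarrow> real" where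
  "ln_f_deriv t k x = (\<Sum>m. ln_factor_deriv t k m x)"

lemma has_real_derivative_divide_power:
  fixes a c :: real
  assumes "0 < 1 + a * x"
  shows "((\<lambda>x. c / (1 + a * x) ^ k) has_real_derivative
    - c * real k * a / (1 + a * x) ^ Suc k) (at x within S)"
proof -
  define u where "u = 1 + a * x"
  have u: "0 < u"
    using assms by (simp add: u_def)
  have "((\<lambda>x. c * inverse ((1 + a * x) ^ k)) has_real_derivative
      c * - (inverse (u ^ k) * (real k * u ^ (k - 1) * a) * inverse (u ^ k))) (at x within S)"
    using u unfolding u_def by (intro DERIV_cmult DERIV_inverse_fun) (auto intro!: derivative_eq_intros)
  moreover have "c * - (inverse (u ^ k) * (real k * u ^ (k - 1) * a) * inverse (u ^ k)) =
      - c * real k * a / u ^ Suc k"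
    using u by (cases k) (simp_all add: field_simps flip: power_add)
  ultimately show ?thesis
    by (simp only: u_def divide_inverse)
qed

lemma has_real_derivative_ln_factor_deriv:
  assumes "1 < t" "0 \<le> x"
  shows "(ln_factor_deriv t k m has_real_derivative ln_factor_deriv t (Suc k) m x) (at x within S)"
proof -
  define a where "a = real (Suc m)"
  have pos: "0 < 1 + a * x"
    using assms by (simp add: a_def add_pos_nonneg)
  show ?thesis
  proof (cases k)
    case 0
    have "ln_factor_deriv t k m = (\<lambda>x. ln (1 + a * x) / t ^ Suc m)"
      using 0 by (simp add: ln_factor_deriv_def a_def fun_eq_iff)
    moreover have "ln_factor_deriv t (Suc k) m x = a / (1 + a * x) / t ^ Suc m"
      using 0 by (simp add: ln_factor_deriv_def a_def)
    ultimately show ?thesis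
      using pos assms(1) by (auto intro!: derivative_eq_intros)
  next
    case (Suc j)
    define c where "c = (-1) ^ j * fact j * a ^ Suc j / t ^ Suc m"
    have "ln_factor_deriv t k m = (\<lambda>x. c / (1 + a * x) ^ Suc j)"
      using Suc by (simp add: ln_factor_deriv_def a_def c_def fun_eq_iff)
    moreover have "ln_factor_deriv t (Suc k) m x = - c * real (Suc j) * a / (1 + a * x) ^ Suc (Suc j)"
      unfolding ln_factor_deriv_def a_def[symmetric] c_def using Suc by (simp add: mult_ac)
    ultimately show ?thesis
      using has_real_derivative_divide_power[OF pos, of c "Suc j"] by (simp only:)
  qed
qed

lemma abs_ln_factor_deriv_le:
  assumes "1 < t" "0 \<le> x" "1 \<le> k"
  shows "\<bar>ln_factor_deriv t k m x\<bar> \<le> fact k * (real (Suc m) ^ k / t ^ m)"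
proof -
  define a where "a = real (Suc m)"
  have u: "1 \<le> (1 + a * x) ^ k"
    using assms by (simp add: a_def)
  have "\<bar>ln_factor_deriv t k m x\<bar> = fact (k - 1) * a ^ k / (t ^ Suc m * (1 + a * x) ^ k)"
    using assms u by (simp add: ln_factor_deriv_def a_def abs_mult power_abs)
  also have "\<dots> \<le> fact k * a ^ k / t ^ m"
  proof (rule frac_le)
    show "fact (k - 1) * a ^ k \<le> fact k * a ^ k"
      by (intro mult_right_mono fact_mono) (auto simp: a_def)
    have "t ^ m \<le> t ^ Suc m"
      using assms by (intro power_increasing) auto
    also have "\<dots> \<le> t ^ Suc m * (1 + a * x) ^ k"
      using assms u by simp
    finally show "t ^ m \<le> t ^ Suc m * (1 + a * x) ^ k" .
  qed (use assms in \<open>auto simp: a_def\<close>)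
  finally show ?thesis
    by (simp add: a_def)
qed

lemma ln_f_deriv_sums_has_derivative:
  assumes "1 < t" "0 \<le> x"
  shows "(\<lambda>m. ln_factor_deriv t k m x) sums ln_f_deriv t k x \<and>
    (ln_f_deriv t k has_real_derivative ln_f_deriv t (Suc k) x) (at x within {0..})"
proof -
  have majorant: "summable (\<lambda>m. fact j * (real (Suc m) ^ j / t ^ m))" for j
    using summable_Suc_power_divide_power[OF assms(1)] by (rule summable_mult)
  have "uniform_limit {0..} (\<lambda>n x. \<Sum>m<n. ln_factor_deriv t (Suc k) m x) (ln_f_deriv t (Suc k))
      sequentially"
    unfolding ln_f_deriv_def
    by (rule Weierstrass_m_test[OF _ majorant[of "Suc k"]])
      (simp only: real_norm_def atLeast_iff, intro abs_ln_factor_deriv_le, use assms in auto)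
  moreover have "summable (\<lambda>m. ln_factor_deriv t k m 0)"
  proof (cases "k = 0")
    case False
    then show ?thesis
      using assms abs_ln_factor_deriv_le
      by (intro summable_comparison_test'[OF majorant[of k], of 0]) auto
  qed (simp add: ln_factor_deriv_def)
  ultimately obtain g where
    g: "\<forall>y\<in>{0..}. (\<lambda>m. ln_factor_deriv t k m y) sums g y \<and>
      (g has_real_derivative ln_f_deriv t (Suc k) y) (at y within {0..})"
    using has_field_derivative_series[of "{0..}" "ln_factor_deriv t k" "ln_factor_deriv t (Suc k)"]
      has_real_derivative_ln_factor_deriv[OF assms(1)]
    by fastforce
  then have "\<forall>y\<ge>0. g y = ln_f_deriv t k y"
    by (auto simp: ln_f_deriv_def sums_iff)
  then show ?thesis
    using g assms has_real_derivative_nonneg_cong[of g "ln_f_deriv t k" x] by auto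
qed

lemma rdifferentiable_upto_ln_f_deriv: "1 < t \<Longrightarrow> rdifferentiable_upto k (ln_f_deriv t j)"
proof (induction k arbitrary: j)
  case 0
  then show ?case by simp
next
  case (Suc k)
  then show ?case
    using ln_f_deriv_sums_has_derivative
    by (intro rdifferentiable_upto_SucI[where h' = "ln_f_deriv t (Suc j)"]) auto
qed

lemma f_t_eq_exp_ln_f_deriv:
  assumes "1 < t" "0 \<le> x"
  shows "f_t t x = exp (ln_f_deriv t 0 x)"
proof -
  have sums: "(\<lambda>m. ln_factor_deriv t 0 m x) sums ln_f_deriv t 0 x"
    using ln_f_deriv_sums_has_derivative[OF assms] by blast
  have "(1 + real (Suc m) * x) powr (1 / t ^ Suc m) = exp (ln_factor_deriv t 0 m x)" for m
  proof -
    have "0 < 1 + real (Suc m) * x"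
      using assms by (simp add: add_pos_nonneg)
    then show ?thesis
      by (simp add: ln_factor_deriv_def powr_def)
  qed
  then have "f_t t x = (\<Prod>m. exp (ln_factor_deriv t 0 m x))"
    by (simp add: f_t_def)
  also have "\<dots> = exp (ln_f_deriv t 0 x)"
    using sums by (simp add: prodinf_exp sums_iff)
  finally show ?thesis .
qed

lemma f_t_0: "1 < t \<Longrightarrow> f_t t 0 = 1"
  by (simp add: f_t_eq_exp_ln_f_deriv ln_f_deriv_def ln_factor_deriv_def)

lemma rdifferentiable_upto_f_t: "1 < t \<Longrightarrow> rdifferentiable_upto k (f_t t)"
  using rdifferentiable_upto_exp[OF rdifferentiable_upto_ln_f_deriv[of t k 0]]
  by (rule rdifferentiable_upto_cong) (auto simp: f_t_eq_exp_ln_f_deriv)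

definition ln_sigma_term :: "real \<Rightarrow> nat \<Rightarrow> real" where
  "ln_sigma_term t m = ln (real (Suc m)) / t ^ Suc m"

lemma summable_ln_sigma_term:
  assumes "1 < t"
  shows "summable (ln_sigma_term t)"
proof (rule summable_comparison_test'[OF summable_Suc_power_divide_power[OF assms, of 1]])
  fix m :: nat
  have "ln (real (Suc m)) / t ^ Suc m \<le> real (Suc m) / t ^ m"
    using assms by (intro frac_le ln_le_minus_one[THEN order_trans] power_increasing) auto
  then show "norm (ln_sigma_term t m) \<le> real (Suc m) ^ 1 / t ^ m"
    using assms by (simp add: ln_sigma_term_def)
qed

lemma sigma_t_eq_exp: "1 < t \<Longrightarrow> sigma_t t = exp (\<Sum>m. ln_sigma_term t m)"
  unfolding sigma_t_def powr_def ln_sigma_term_def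
  using summable_ln_sigma_term[unfolded ln_sigma_term_def]
  by (simp add: prodinf_exp)

lemma g_seq_eq_exp: "t \<noteq> 0 \<Longrightarrow> g_seq t n = exp (t ^ n * (\<Sum>m<n. ln_sigma_term t m))"
proof (induction n)
  case 0
  then show ?case by simp
next
  case (Suc n)
  have "t ^ Suc n * (\<Sum>m<Suc n. ln_sigma_term t m) =
      ln (real (Suc n)) + t ^ Suc n * (\<Sum>m<n. ln_sigma_term t m)"
    using Suc.prems by (simp add: ln_sigma_term_def algebra_simps)
  then show ?case
    using Suc by (simp add: powr_def exp_add mult_ac)
qed

lemma ln_sigma_term_shift:
  assumes "t \<noteq> 0" "0 < n"
  shows "t ^ n * ln_sigma_term t (j + n) = ln (real n) / t ^ Suc j + ln_factor_deriv t 0 j (1 / real n)"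
proof -
  have "real (Suc (j + n)) = real n * (1 + real (Suc j) * (1 / real n))"
    using assms by (simp add: field_simps)
  moreover have "0 < 1 + real (Suc j) * (1 / real n)"
    by (simp add: add_pos_nonneg)
  ultimately have "ln (real (Suc (j + n))) = ln (real n) + ln (1 + real (Suc j) * (1 / real n))"
    using assms by (simp add: ln_mult)
  moreover have "t ^ n / t ^ Suc (j + n) = 1 / t ^ Suc j"
    using assms by (simp add: power_add field_simps)
  ultimately have "t ^ n * ln_sigma_term t (j + n) =
      (ln (real n) + ln (1 + real (Suc j) * (1 / real n))) * (1 / t ^ Suc j)"
    unfolding ln_sigma_term_def by (metis times_divide_eq_right mult.commute)
  then show ?thesis
    by (simp add: ln_factor_deriv_def add_divide_distrib)
qed

lemma sums_ln_sigma_tail: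
  assumes "1 < t" "0 < n"
  shows "(\<lambda>j. t ^ n * ln_sigma_term t (j + n)) sums (ln (real n) / (t - 1) + ln_f_deriv t 0 (1 / real n))"
proof -
  have "(\<lambda>j. ln (real n) / t * (1 / t) ^ j) sums (ln (real n) / t * (1 / (1 - 1 / t)))"
    using assms by (intro sums_mult geometric_sums) auto
  moreover have "ln (real n) / t * (1 / (1 - 1 / t)) = ln (real n) / (t - 1)"
    using assms by (simp add: field_simps)
  moreover have "(\<lambda>j. ln (real n) / t * (1 / t) ^ j) = (\<lambda>j. ln (real n) / t ^ Suc j)"
    by (simp add: fun_eq_iff power_one_over)
  ultimately have "(\<lambda>j. ln (real n) / t ^ Suc j) sums (ln (real n) / (t - 1))"
    by (simp only:)
  then show ?thesis
    using ln_f_deriv_sums_has_derivative[OF assms(1), of "1 / real n" 0] assms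
    by (simp add: ln_sigma_term_shift sums_add)
qed

lemma g_seq_eq_sigma_t_f_t:
  assumes "1 < t" "0 < n"
  shows "g_seq t n = sigma_t t powr (t ^ n) * real n powr (- 1 / (t - 1)) * inverse (f_t t (1 / real n))"
proof -
  define S where "S = (\<Sum>m. ln_sigma_term t m)"
  define P where "P = (\<Sum>m<n. ln_sigma_term t m)"
  have "(\<lambda>j. t ^ n * ln_sigma_term t (j + n)) sums (t ^ n * (S - P))"
    unfolding S_def P_def
    by (intro sums_mult sums_split_initial_segment summable_sums summable_ln_sigma_term assms)
  then have "t ^ n * S = t ^ n * P + ln (real n) / (t - 1) + ln_f_deriv t 0 (1 / real n)"
    using sums_unique2[OF _ sums_ln_sigma_tail[OF assms]] by (simp add: algebra_simps)
  then have "sigma_t t powr (t ^ n) = g_seq t n * real n powr (1 / (t - 1)) * f_t t (1 / real n)"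
    using assms
    by (simp add: sigma_t_eq_exp g_seq_eq_exp f_t_eq_exp_ln_f_deriv powr_def exp_add mult_ac
        flip: S_def P_def)
  moreover have "real n powr (1 / (t - 1)) * real n powr (- 1 / (t - 1)) = 1"
    using assms by (simp add: powr_add [symmetric])
  moreover have "0 < f_t t (1 / real n)"
    using assms by (simp add: f_t_eq_exp_ln_f_deriv)
  ultimately show ?thesis
    by (simp add: field_simps)
qed

lemma f_t_Maclaurin:
  assumes "1 < t" "0 < N" "0 < h"
  shows "\<exists>\<mu>. 0 < \<mu> \<and> \<mu> < h \<and>
    f_t t h = 1 + (\<Sum>k=1..N-1. nrderiv k (f_t t) 0 / fact k * h ^ k) + nrderiv N (f_t t) \<mu> / fact N * h ^ N"
proof -
  obtain \<mu> where \<mu>: "0 < \<mu>" "\<mu> < h"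
    "f_t t h = (\<Sum>k<N. nrderiv k (f_t t) 0 / fact k * h ^ k) + nrderiv N (f_t t) \<mu> / fact N * h ^ N"
    using Maclaurin_right[OF assms(3,2), of "\<lambda>k. nrderiv k (f_t t)"]
      has_real_derivative_nrderiv[OF rdifferentiable_upto_f_t[OF assms(1)]]
    by auto
  have "{..<N} = insert 0 {1..N-1}"
    using assms(2) by auto
  then have "(\<Sum>k<N. nrderiv k (f_t t) 0 / fact k * h ^ k) =
      1 + (\<Sum>k=1..N-1. nrderiv k (f_t t) 0 / fact k * h ^ k)"
    using assms(1) by (simp add: f_t_0)
  with \<mu> show ?thesis
    by auto
qed

lemma g_seq_expansion:
  assumes "1 < t" "0 < N" "0 < n"
  shows "\<exists>\<mu>. 0 < \<mu> \<and> \<mu> < 1 / real n \<and>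
    g_seq t n = sigma_t t powr (t ^ n) * real n powr (- 1 / (t - 1)) *
      inverse (1 + (\<Sum>k=1..N-1. nrderiv k (f_t t) 0 / (real n ^ k * fact k))
                 + nrderiv N (f_t t) \<mu> / (real n ^ N * fact N))"
proof -
  obtain \<mu> where "0 < \<mu>" "\<mu> < 1 / real n" and f_t_eq:
    "f_t t (1 / real n) = 1 + (\<Sum>k=1..N-1. nrderiv k (f_t t) 0 / fact k * (1 / real n) ^ k)
      + nrderiv N (f_t t) \<mu> / fact N * (1 / real n) ^ N"
    using f_t_Maclaurin[OF assms(1,2), of "1 / real n"] assms(3) by auto
  moreover have "a / fact k * (1 / real n) ^ k = a / (real n ^ k * fact k)" for a k
    by (simp add: power_one_over)
  ultimately show ?thesis
    using g_seq_eq_sigma_t_f_t[OF assms(1,3)] by (intro exI[of _ \<mu>]) (simp only: f_t_eq)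
qed

lemma tendsto_nrderiv_f_t:
  assumes "1 < t" "\<mu> \<longlonglongrightarrow> 0" "eventually (\<lambda>n. 0 \<le> \<mu> n) sequentially"
  shows "(\<lambda>n. nrderiv N (f_t t) (\<mu> n)) \<longlonglongrightarrow> nrderiv N (f_t t) 0"
proof -
  have "continuous (at 0 within {0..}) (nrderiv N (f_t t))"
    using has_real_derivative_nrderiv[OF rdifferentiable_upto_f_t[OF assms(1)], of N "Suc N" 0]
    by (simp add: DERIV_continuous)
  moreover have "eventually (\<lambda>n. \<mu> n \<in> {0..}) sequentially"
    using assms(3) by simp
  ultimately show ?thesis
    using continuous_within_tendsto_compose assms(2) by blast
qed

theorem lemma21:
  fixes t :: real
  assumes "t > 1"
  shows "\<exists>\<mu> :: nat \<Rightarrow> nat \<Rightarrow> real.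
     (\<forall>N\<ge>2. \<forall>n\<ge>1. \<mu> N n > 0 \<and>
        g_seq t n = sigma_t t powr (t ^ n) * real n powr (- 1 / (t - 1)) *
          inverse (1 + (\<Sum>k=1..N-1. nrderiv k (f_t t) 0 / (real n ^ k * fact k))
                     + nrderiv N (f_t t) (\<mu> N n) / (real n ^ N * fact N))) \<and>
     (\<forall>N\<ge>2. (\<lambda>n. \<mu> N n) \<longlonglongrightarrow> 0 \<and>
        (\<lambda>n. nrderiv N (f_t t) (\<mu> N n)) \<longlonglongrightarrow> nrderiv N (f_t t) 0)"
proof -
  obtain \<mu> :: "nat \<Rightarrow> nat \<Rightarrow> real" where \<mu>: "\<And>N n. 0 < N \<Longrightarrow> 0 < n \<Longrightarrow>
    0 < \<mu> N n \<and> \<mu> N n < 1 / real n \<and>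
    g_seq t n = sigma_t t powr (t ^ n) * real n powr (- 1 / (t - 1)) *
      inverse (1 + (\<Sum>k=1..N-1. nrderiv k (f_t t) 0 / (real n ^ k * fact k))
                 + nrderiv N (f_t t) (\<mu> N n) / (real n ^ N * fact N))"
    by atomize_elim (intro choice allI; use g_seq_expansion[OF assms] in blast)
  have nonneg: "eventually (\<lambda>n. 0 \<le> \<mu> N n) sequentially"
    and below: "eventually (\<lambda>n. \<mu> N n \<le> 1 / real n) sequentially" if "0 < N" for N
    unfolding eventually_sequentially using \<mu>[OF that] by (auto intro!: exI[of _ 1] less_imp_le)
  have lim: "(\<lambda>n. \<mu> N n) \<longlonglongrightarrow> 0" if "0 < N" for N
    using nonneg[OF that] below[OF that] by (rule tendsto_sandwich) (simp_all add: lim_1_over_n)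
  show ?thesis
    using \<mu> lim tendsto_nrderiv_f_t[OF assms lim nonneg] by (intro exI[of _ \<mu>]) auto
qed

end
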